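(* There is an absolute constant $c>0$ such that for all $n$, $p\in(0,1)$, $q\in(0,1]$ and $\epsilon>0$, $$\mathrm{CCU}^{\mu_p}_{\frac12-\epsilon}(\mathcal F_q)\ge\mathrm{CC}^{\nu_{p,q}}_{\frac12-\epsilon+\epsilon'}(F),\qquad\epsilon'=2^{-cqn}.$$
   Context: For $S\subseteq[n]$, $f_S(x,y)=\bigoplus_{i\in S}(x_i\oplus y_i)$. $\mathcal F_q=\{(f_S,f_T): |S\triangle T|\le qn\}$. $\mu_p$: $x$ uniform in $\{0,1\}^n$, $y$ obtained from $x$ by flipping each bit independently with probability $p$. $\nu_{p,q}$ is the distribution on Alice-input $(S,x)$ and Bob-input $(T,y)$ ($S,T\subseteq[n]$, $x,y\in\{0,1\}^n$) where $S$ is a uniformly random subset of $[n]$, $T$ is obtained from $S$ by flipping the membership of each $i\in[n]$ independently with probability $q/2$, and $(x,y)\sim\mu_p$ independently of $(S,T)$. $F((S,x),(T,y))=f_T(x,y)=\bigoplus_{i\in T}(x_i\oplus y_i)$. $\mathrm{CC}^{\nu}_\epsilon(F)$ is the minimum communication of a (two-way) protocol between Alice and Bob whose output differs from $F$ with probability at most $\epsilon$ under $\nu$. Uncertain setting: Alice receives $(f,x)$, Bob receives $(g,y)$, with shared public randomness; a public-coin protocol $\epsilon$-computes $\mathcal F$ under $\mu$ if for every $(f,g)\in\mathcal F$ the probability over $(x,y)\sim\mu$ and coins that Bob's output differs from $g(x,y)$ is at most $\epsilon$; $\mathrm{CCU}^\mu_\epsilon(\mathcal F)$ is the minimum over such protocols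 of the worst-case number of bits communicated over all $(f,g)\in\mathcal F$, $(x,y)$ in the support of $\mu$ and coin settings. *)

theory Defs
  imports "HOL-Probability.Probability" "HOL-Library.Extended_Nat"
begin

text \<open>At a leaf, Bob outputs a bit that may depend on his own
input (and, implicitly, on the transcript, i.e. the leaf).\<close>

datatype ('a, 'b) ptree =
    Out "'b \<Rightarrow> bool"
  | ANode "'a \<Rightarrow> bool" "('a, 'b) ptree" "('a, 'b) ptree"
  | BNode "'b \<Rightarrow> bool" "('a, 'b) ptree" "('a, 'b) ptree"

fun run :: "('a, 'b) ptree \<Rightarrow> 'a \<Rightarrow> 'b \<Rightarrow> bool" where
  "run (Out o') a b = o' b"
| "run (ANode m l r) a b = (if m a then run r a b else run l a b)"
| "run (BNode m l r) a b = (if m b then run r a b else run l a b)"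

fun bits :: "('a, 'b) ptree \<Rightarrow> 'a \<Rightarrow> 'b \<Rightarrow> nat" where
  "bits (Out o') a b = 0"
| "bits (ANode m l r) a b = Suc (if m a then bits r a b else bits l a b)"
| "bits (BNode m l r) a b = Suc (if m b then bits r a b else bits l a b)"

fun rand_subset :: "real \<Rightarrow> nat \<Rightarrow> nat set pmf" where
  "rand_subset r 0 = return_pmf {}"
| "rand_subset r (Suc n) =
     bind_pmf (rand_subset r n) (\<lambda>A. map_pmf (\<lambda>b. if b then insert n A else A) (bernoulli_pmf r))"

fun flip_bits :: "real \<Rightarrow> bool list \<Rightarrow> bool list pmf" where
  "flip_bits r [] = return_pmf []"
| "flip_bits r (b # bs) =
     bind_pmf (bernoulli_pmf r) (\<lambda>c. map_pmf (\<lambda>ys. (b \<noteq> c) # ys) (flip_bits r bs))"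

definition mu :: "real \<Rightarrow> nat \<Rightarrow> (bool list \<times> bool list) pmf" where
  "mu p n = bind_pmf (pmf_of_set {xs. length xs = n})
              (\<lambda>x. map_pmf (\<lambda>y. (x, y)) (flip_bits p x))"

definition fS :: "nat set \<Rightarrow> bool list \<Rightarrow> bool list \<Rightarrow> bool" where
  "fS S x y = odd (card {i \<in> S. i < length x \<and> i < length y \<and> x ! i \<noteq> y ! i})"

definition Fq :: "nat \<Rightarrow> real \<Rightarrow>
    ((bool list \<Rightarrow> bool list \<Rightarrow> bool) \<times> (bool list \<Rightarrow> bool list \<Rightarrow> bool)) set" where
  "Fq n q = {(fS S, fS T) | S T. S \<subseteq> {..<n} \<and> T \<subseteq> {..<n}
                                \<and> real (card (S - T \<union> (T - S))) \<le> q * real n}"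

definition nu :: "real \<Rightarrow> real \<Rightarrow> nat \<Rightarrow> ((nat set \<times> bool list) \<times> (nat set \<times> bool list)) pmf" where
  "nu p q n =
     bind_pmf (pmf_of_set (Pow {..<n})) (\<lambda>S.
     bind_pmf (rand_subset (q / 2) n) (\<lambda>D.
     map_pmf (\<lambda>(x, y). ((S, x), (S - D \<union> (D - S), y))) (mu p n)))"

definition Fbig :: "(nat set \<times> bool list) \<Rightarrow> (nat set \<times> bool list) \<Rightarrow> bool" where
  "Fbig A B = fS (fst B) (snd A) (snd B)"

text \<open>Distributional complexity: deterministic protocols, error at most \<epsilon> under \<nu>,
cost = worst case over the support of \<nu>. Inf of the empty set is \<infinity>.\<close>
definition CC_dist :: "('a \<times> 'b) pmf \<Rightarrow> ('a \<Rightarrow> 'b \<Rightarrow> bool) \<Rightarrow> real \<Rightarrow> enat" where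
  "CC_dist \<nu> F \<epsilon> = Inf {enat k | k. \<exists>P :: ('a, 'b) ptree.
       measure_pmf.prob \<nu> {(a, b). run P a b \<noteq> F a b} \<le> \<epsilon>
     \<and> (\<forall>(a, b) \<in> set_pmf \<nu>. bits P a b \<le> k)}"

text \<open>Uncertain setting: Alice gets (f,x), Bob gets (g,y); a public-coin protocol is a
probability distribution over deterministic protocol trees (the public coins select the tree).\<close>
definition CCU :: "('x \<times> 'y) pmf \<Rightarrow> (('x \<Rightarrow> 'y \<Rightarrow> bool) \<times> ('x \<Rightarrow> 'y \<Rightarrow> bool)) set \<Rightarrow> real \<Rightarrow> enat" where
  "CCU \<mu> Fam \<epsilon> = Inf {enat k | k. \<exists>Prot :: (('x \<Rightarrow> 'y \<Rightarrow> bool) \<times> 'x, ('x \<Rightarrow> 'y \<Rightarrow> bool) \<times> 'y) ptree pmf.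
       (\<forall>(f, g) \<in> Fam. measure_pmf.prob (pair_pmf Prot \<mu>)
            {(P, (x, y)). run P (f, x) (g, y) \<noteq> g x y} \<le> \<epsilon>)
     \<and> (\<forall>(f, g) \<in> Fam. \<forall>(x, y) \<in> set_pmf \<mu>. \<forall>P \<in> set_pmf Prot. bits P (f, x) (g, y) \<le> k)}"

end

theory Submission
  imports Defs "HOL-Analysis.Harmonic_Numbers"
begin

text \<open>Alice, holding \<open>(S, x)\<close>, and Bob, holding \<open>(T, y)\<close>, run the uncertain-setting protocol
on the pair \<open>(f\<^sub>S, f\<^sub>T)\<close>. Under \<open>\<nu>\<^sub>p\<^sub>,\<^sub>q\<close> the symmetric difference \<open>S \<triangle> T\<close> is a random subset of
density \<open>q/2\<close>, so by Markov's inequality applied to \<open>2\<^bsup>|S \<triangle> T|\<^esup>\<close> it has more than \<open>qn\<close>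
elements with probability at most \<open>(1 + q/2)\<^sup>n 2\<^bsup>-qn\<^esup> \<le> 2\<^bsup>-qn/4\<^esup>\<close>. On the complementary
event \<open>(f\<^sub>S, f\<^sub>T) \<in> \<F>\<^sub>q\<close>, so there the protocol errs with probability at most \<open>1/2 - \<epsilon>\<close>.
Averaging over the public coins yields a single deterministic protocol with error at most
\<open>1/2 - \<epsilon> + 2\<^bsup>-qn/4\<^esup>\<close>; cut off after \<open>k\<close> bits it keeps this error and has cost \<open>k\<close>.\<close>

fun map_ptree :: "('a, 'b) ptree \<Rightarrow> ('c \<Rightarrow> 'a) \<Rightarrow> ('d \<Rightarrow> 'b) \<Rightarrow> ('c, 'd) ptree" where
  "map_ptree (Out o') fa fb = Out (o' \<circ> fb)"
| "map_ptree (ANode m l r) fa fb = ANode (m \<circ> fa) (map_ptree l fa fb) (map_ptree r fa fb)"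
| "map_ptree (BNode m l r) fa fb = BNode (m \<circ> fb) (map_ptree l fa fb) (map_ptree r fa fb)"

lemma run_map_ptree: "run (map_ptree P fa fb) a b = run P (fa a) (fb b)"
  by (induction P) auto

lemma bits_map_ptree: "bits (map_ptree P fa fb) a b = bits P (fa a) (fb b)"
  by (induction P) auto

fun truncate_ptree :: "nat \<Rightarrow> ('a, 'b) ptree \<Rightarrow> ('a, 'b) ptree" where
  "truncate_ptree k (Out o') = Out o'"
| "truncate_ptree 0 (ANode m l r) = Out (\<lambda>_. False)"
| "truncate_ptree 0 (BNode m l r) = Out (\<lambda>_. False)"
| "truncate_ptree (Suc k) (ANode m l r) = ANode m (truncate_ptree k l) (truncate_ptree k r)"
| "truncate_ptree (Suc k) (BNode m l r) = BNode m (truncate_ptree k l) (truncate_ptree k r)"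

lemma bits_truncate_ptree: "bits (truncate_ptree k P) a b \<le> k"
  by (induction k P rule: truncate_ptree.induct) auto

lemma run_truncate_ptree: "bits P a b \<le> k \<Longrightarrow> run (truncate_ptree k P) a b = run P a b"
  by (induction k P rule: truncate_ptree.induct) (auto split: if_splits)

lemma set_pmf_rand_subset: "D \<in> set_pmf (rand_subset r n) \<Longrightarrow> D \<subseteq> {..<n}"
  by (induction n arbitrary: D) (fastforce split: if_splits)+

lemma nn_integral_rand_subset_power:
  assumes "0 \<le> r" "r \<le> 1" "0 \<le> a"
  shows "(\<integral>\<^sup>+D. ennreal (a ^ card D) \<partial>rand_subset r n) = ennreal ((1 - r + r * a) ^ n)"
proof (induction n)
  case 0
  then show ?case by simp
next
  case (Suc n)
  have last_coordinate: "(\<integral>\<^sup>+b. ennreal (a ^ card (if b then insert n A else A)) \<partial>bernoulli_pmf r)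
      = ennreal (1 - r + r * a) * ennreal (a ^ card A)"
    if "A \<in> set_pmf (rand_subset r n)" for A
  proof -
    from set_pmf_rand_subset[OF that] have "n \<notin> A" "finite A"
      by (auto intro: finite_subset)
    then show ?thesis
      using assms by (simp add: ennreal_mult[symmetric] ennreal_plus[symmetric] del: ennreal_plus)
        (simp add: algebra_simps)
  qed
  have "(\<integral>\<^sup>+D. ennreal (a ^ card D) \<partial>rand_subset r (Suc n))
      = (\<integral>\<^sup>+A. ennreal (1 - r + r * a) * ennreal (a ^ card A) \<partial>rand_subset r n)"
    by (simp add: map_pmf_def) (intro nn_integral_cong_AE AE_pmfI last_coordinate)
  also have "\<dots> = ennreal (1 - r + r * a) * ennreal ((1 - r + r * a) ^ n)"
    by (subst nn_integral_cmult) (simp_all add: Suc)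
  also have "\<dots> = ennreal ((1 - r + r * a) ^ Suc n)"
    using assms by (simp add: ennreal_mult[symmetric] del: ennreal_plus)
  finally show ?case .
qed

lemma emeasure_rand_subset_card_gt:
  assumes "0 \<le> r" "r \<le> 1"
  shows "emeasure (rand_subset r n) {D. t < real (card D)} \<le> ennreal ((1 + r) ^ n * 2 powr (- t))"
proof -
  have "1 \<le> ennreal (2 powr (- t)) * ennreal (2 ^ card D)" if "t < real (card D)" for D :: "nat set"
  proof -
    have "1 \<le> 2 powr (real (card D) - t)"
      using that by (intro ge_one_powr_ge_zero) auto
    then show ?thesis
      by (simp add: ennreal_mult[symmetric] powr_diff powr_realpow powr_minus divide_inverse mult.commute)
  qed
  then have "emeasure (rand_subset r n) {D. t < real (card D)}
      \<le> emeasure (rand_subset r n) {D \<in> UNIV. 1 \<le> ennreal (2 powr (- t)) * ennreal (2 ^ card D)}"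
    by (intro emeasure_mono) auto
  also have "\<dots> \<le> ennreal (2 powr (- t)) * (\<integral>\<^sup>+D. ennreal (2 ^ card D) * indicator UNIV D \<partial>rand_subset r n)"
    by (rule nn_integral_Markov_inequality) auto
  also have "\<dots> = ennreal (2 powr (- t)) * ennreal ((1 + r) ^ n)"
    using nn_integral_rand_subset_power[OF assms, of 2 n] by (simp add: add.commute)
  also have "\<dots> = ennreal ((1 + r) ^ n * 2 powr (- t))"
    using assms by (simp add: ennreal_mult mult.commute)
  finally show ?thesis .
qed

lemma rand_subset_card_tail:
  assumes "0 < q" "q \<le> 1"
  shows "emeasure (rand_subset (q/2) n) {D. q * real n < real (card D)}
    \<le> ennreal (2 powr (- (1/4) * q * real n))"
proof -
  have "(1 + q/2) ^ n \<le> exp (q/2) ^ n"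
    using assms by (intro power_mono) (auto simp: exp_ge_add_one_self)
  also have "\<dots> = exp (q * real n / 2)"
    by (simp flip: exp_of_nat_mult add: mult.commute)
  also have "\<dots> \<le> 2 powr (3/4 * q * real n)"
    using ln2_ge_two_thirds mult_left_mono[of "2/3" "ln 2" "3/4 * q * real n"] assms
    by (simp add: powr_def)
  finally have "(1 + q/2) ^ n * 2 powr (- q * real n) \<le> 2 powr (3/4 * q * real n) * 2 powr (- q * real n)"
    by (rule mult_right_mono) simp
  also have "\<dots> = 2 powr (- (1/4) * q * real n)"
    by (simp flip: powr_add)
  finally have bound: "(1 + q/2) ^ n * 2 powr (- q * real n) \<le> 2 powr (- (1/4) * q * real n)" .
  have "emeasure (rand_subset (q/2) n) {D. q * real n < real (card D)}
      \<le> ennreal ((1 + q/2) ^ n * 2 powr (- (q * real n)))"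
    by (rule emeasure_rand_subset_card_gt) (use assms in auto)
  also have "\<dots> \<le> ennreal (2 powr (- (1/4) * q * real n))"
    using bound by (intro ennreal_leI) simp
  finally show ?thesis .
qed

lemma pair_pmf_bind_pmf_right: "pair_pmf A (bind_pmf B F) = bind_pmf B (\<lambda>b. pair_pmf A (F b))"
  unfolding pair_pmf_def by (simp add: bind_assoc_pmf) (rule bind_commute_pmf)

lemma emeasure_bind_pmf_le_add:
  fixes F :: "'a \<Rightarrow> 'b pmf"
  assumes "\<And>a. a \<in> set_pmf A \<Longrightarrow> a \<notin> B \<Longrightarrow> emeasure (F a) X \<le> b"
  shows "emeasure (bind_pmf A F) X \<le> b + emeasure A B"
proof -
  have "emeasure (bind_pmf A F) X = (\<integral>\<^sup>+x. indicator X x \<partial>bind_pmf A F)"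
    by simp
  also have "\<dots> = (\<integral>\<^sup>+a. emeasure (F a) X \<partial>A)"
    by simp
  also have "\<dots> \<le> (\<integral>\<^sup>+a. b + indicator B a \<partial>A)"
    using assms by (intro nn_integral_mono_AE AE_pmfI)
      (auto intro: order_trans[OF measure_pmf.emeasure_le_1] add_increasing split: split_indicator)
  also have "\<dots> = b + emeasure A B"
    by (simp add: nn_integral_add measure_pmf.emeasure_space_1)
  finally show ?thesis .
qed

lemma ex_set_pmf_le_nn_integral: "\<exists>x\<in>set_pmf M. f x \<le> (\<integral>\<^sup>+x. f x \<partial>M)"
proof (rule ccontr)
  let ?I = "\<integral>\<^sup>+x. f x \<partial>M"
  assume "\<not> ?thesis"
  then have less: "?I < f x" if "x \<in> set_pmf M" for x
    using that by (auto simp: not_le)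
  obtain x where x: "x \<in> set_pmf M"
    using set_pmf_not_empty[of M] by blast
  then have "?I \<noteq> \<infinity>"
    using less[OF x] by auto
  then have "(\<integral>\<^sup>+x. ?I \<partial>M) < ?I"
    using less x by (intro nn_integral_less) (auto simp: AE_measure_pmf_iff not_le intro!: less_imp_le)
  then show False
    by (simp add: measure_pmf.emeasure_space_1)
qed

lemma ex_set_pmf_emeasure_le_pair_pmf:
  fixes N :: "'b pmf"
  shows "\<exists>x\<in>set_pmf M. emeasure N (Pair x -` X) \<le> emeasure (pair_pmf M N) X"
proof -
  have "emeasure (pair_pmf M N) X = (\<integral>\<^sup>+z. indicator X z \<partial>pair_pmf M N)"
    by simp
  also have "\<dots> = (\<integral>\<^sup>+x. emeasure N (Pair x -` X) \<partial>M)"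
    by (simp add: nn_integral_pair_pmf' flip: indicator_vimage)
  finally show ?thesis
    using ex_set_pmf_le_nn_integral[of M "\<lambda>x. emeasure N (Pair x -` X)"] by simp
qed

type_synonym bitfun = "bool list \<Rightarrow> bool list \<Rightarrow> bool"

text \<open>The cut-off matters when \<open>|S \<triangle> T| > qn\<close>: there the cost bound of the uncertain protocol
does not apply, but the simulated protocol must still use at most \<open>k\<close> bits.\<close>

definition simulate :: "nat \<Rightarrow> (bitfun \<times> bool list, bitfun \<times> bool list) ptree
    \<Rightarrow> (nat set \<times> bool list, nat set \<times> bool list) ptree" where
  "simulate k P = truncate_ptree k (map_ptree P (apfst fS) (apfst fS))"

lemma bits_simulate: "bits (simulate k P) a b \<le> k"
  by (simp add: simulate_def bits_truncate_ptree)

lemma run_simulate: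
  "bits P (fS S, x) (fS T, y) \<le> k \<Longrightarrow> run (simulate k P) (S, x) (T, y) = run P (fS S, x) (fS T, y)"
  by (simp add: simulate_def run_truncate_ptree bits_map_ptree run_map_ptree)

lemma fS_pair_in_Fq:
  "S \<subseteq> {..<n} \<Longrightarrow> T \<subseteq> {..<n} \<Longrightarrow> real (card (S - T \<union> (T - S))) \<le> q * real n
    \<Longrightarrow> (fS S, fS T) \<in> Fq n q"
  unfolding Fq_def by blast

lemma pair_pmf_nu:
  "pair_pmf Prot (nu p q n) = bind_pmf (pmf_of_set (Pow {..<n})) (\<lambda>S. bind_pmf (rand_subset (q / 2) n) (\<lambda>D.
     map_pmf (apsnd (\<lambda>(x, y). ((S, x), (S - D \<union> (D - S), y)))) (pair_pmf Prot (mu p n))))"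
  by (simp add: nu_def pair_pmf_bind_pmf_right pair_map_pmf2)

lemma emeasure_error_simulate:
  assumes err: "\<forall>(f, g) \<in> Fq n q. measure_pmf.prob (pair_pmf Prot (mu p n))
      {(P, (x, y)). run P (f, x) (g, y) \<noteq> g x y} \<le> b"
    and cost: "\<forall>(f, g) \<in> Fq n q. \<forall>(x, y) \<in> set_pmf (mu p n). \<forall>P \<in> set_pmf Prot. bits P (f, x) (g, y) \<le> k"
  shows "emeasure (pair_pmf Prot (nu p q n)) {(P, (a, c)). run (simulate k P) a c \<noteq> Fbig a c}
    \<le> ennreal b + emeasure (rand_subset (q / 2) n) {D. q * real n < real (card D)}"
proof -
  define Err :: "(_ \<times> (nat set \<times> bool list) \<times> (nat set \<times> bool list)) set"
    where "Err = {(P, (a, c)). run (simulate k P) a c \<noteq> Fbig a c}"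
  define Big where "Big = {D :: nat set. q * real n < real (card D)}"
  have "emeasure (pair_pmf Prot (mu p n)) (apsnd (\<lambda>(x, y). ((S, x), (S - D \<union> (D - S), y))) -` Err)
      \<le> ennreal b"
    if S: "S \<subseteq> {..<n}" and D: "D \<in> set_pmf (rand_subset (q / 2) n)" "D \<notin> Big" for S D
  proof -
    define T where "T = S - D \<union> (D - S)"
    have "D \<subseteq> {..<n}"
      using D(1) by (rule set_pmf_rand_subset)
    moreover have "S - T \<union> (T - S) = D"
      by (auto simp: T_def)
    ultimately have ST: "(fS S, fS T) \<in> Fq n q"
      using S D(2) by (intro fS_pair_in_Fq) (auto simp: T_def Big_def not_less)
    have "emeasure (pair_pmf Prot (mu p n)) (apsnd (\<lambda>(x, y). ((S, x), (T, y))) -` Err)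
        = emeasure (pair_pmf Prot (mu p n)) {(P, (x, y)). run P (fS S, x) (fS T, y) \<noteq> fS T x y}"
      using ST cost
      by (intro emeasure_eq_AE AE_pmfI) (fastforce simp: Err_def Fbig_def T_def run_simulate)+
    also have "\<dots> \<le> ennreal b"
      using ST err by (auto simp: measure_pmf.emeasure_eq_measure intro!: ennreal_leI)
    finally show ?thesis
      by (simp only: T_def)
  qed
  moreover have "set_pmf (pmf_of_set (Pow {..<n})) = Pow {..<n}"
    by (intro set_pmf_of_set) auto
  ultimately have "emeasure (pair_pmf Prot (nu p q n)) Err
      \<le> (ennreal b + emeasure (rand_subset (q / 2) n) Big) + emeasure (pmf_of_set (Pow {..<n})) {}"
    unfolding pair_pmf_nu
    by (intro emeasure_bind_pmf_le_add) auto
  then show ?thesis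
    by (simp add: Err_def Big_def)
qed

lemma CC_dist_le_public_coin_cost:
  fixes Prot :: "(bitfun \<times> bool list, bitfun \<times> bool list) ptree pmf"
  assumes err: "\<forall>(f, g) \<in> Fq n q. measure_pmf.prob (pair_pmf Prot (mu p n))
      {(P, (x, y)). run P (f, x) (g, y) \<noteq> g x y} \<le> b"
    and cost: "\<forall>(f, g) \<in> Fq n q. \<forall>(x, y) \<in> set_pmf (mu p n). \<forall>P \<in> set_pmf Prot. bits P (f, x) (g, y) \<le> k"
    and q: "0 < q" "q \<le> 1"
  shows "CC_dist (nu p q n) Fbig (b + 2 powr (- (1/4) * q * real n)) \<le> enat k"
proof -
  define Err :: "(_ \<times> (nat set \<times> bool list) \<times> (nat set \<times> bool list)) set"
    where "Err = {(P, (a, c)). run (simulate k P) a c \<noteq> Fbig a c}"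
  define B where "B = b + 2 powr (- (1/4) * q * real n)"
  have "(fS {}, fS {}) \<in> Fq n q"
    using q by (intro fS_pair_in_Fq) auto
  then have "0 \<le> b"
    using err by (fastforce intro: order_trans[OF measure_nonneg])
  then have "0 \<le> B"
    by (simp add: B_def)
  have "emeasure (pair_pmf Prot (nu p q n)) Err
      \<le> ennreal b + emeasure (rand_subset (q / 2) n) {D. q * real n < real (card D)}"
    unfolding Err_def by (rule emeasure_error_simulate[OF err cost])
  also have "\<dots> \<le> ennreal B"
    using \<open>0 \<le> b\<close> rand_subset_card_tail[OF q] by (simp add: B_def add_left_mono)
  finally obtain P where "P \<in> set_pmf Prot" and "emeasure (nu p q n) (Pair P -` Err) \<le> ennreal B"
    using ex_set_pmf_emeasure_le_pair_pmf[of Prot "nu p q n" Err] by (auto intro: order_trans)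
  moreover have "Pair P -` Err = {(a, c). run (simulate k P) a c \<noteq> Fbig a c}"
    by (auto simp: Err_def)
  ultimately have "measure_pmf.prob (nu p q n) {(a, c). run (simulate k P) a c \<noteq> Fbig a c} \<le> B"
    using \<open>0 \<le> B\<close> by (simp add: measure_pmf.emeasure_eq_measure)
  then show ?thesis
    unfolding CC_dist_def B_def by (intro Inf_lower) (auto intro: bits_simulate)
qed

theorem mainTheorem10:
  shows "\<exists>c::real. c > 0 \<and>
    (\<forall>(n::nat) (p::real) (q::real) (\<epsilon>::real).
       0 < p \<and> p < 1 \<and> 0 < q \<and> q \<le> 1 \<and> 0 < \<epsilon> \<longrightarrow>
       CCU (mu p n) (Fq n q) (1/2 - \<epsilon>)
         \<ge> CC_dist (nu p q n) Fbig (1/2 - \<epsilon> + 2 powr (- c * q * real n)))"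
proof (intro exI[of _ "1/4"] conjI allI impI)
  fix n :: nat and p q \<epsilon> :: real
  assume "0 < p \<and> p < 1 \<and> 0 < q \<and> q \<le> 1 \<and> 0 < \<epsilon>"
  then have q: "0 < q" "q \<le> 1" by auto
  show "CC_dist (nu p q n) Fbig (1/2 - \<epsilon> + 2 powr (- (1/4) * q * real n)) \<le> CCU (mu p n) (Fq n q) (1/2 - \<epsilon>)"
    unfolding CCU_def
    by (intro Inf_greatest) (blast intro: CC_dist_le_public_coin_cost[OF _ _ q])
qed simp

end
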